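(* Let $\Phi_\beta$ ($\beta\ge0$) be as in Assumption F2 and let $\Pi_\Phi=\{i: s_i\ne0\}$. Let $0\le\beta_1<\beta_0$, let $y$ be any minimizer of $\Phi_{\beta_1}$ and $z$ any minimizer of $\Phi_{\beta_0}$ over $\{0,1\}^n$. Then $H(y)\cap\Pi_\Phi\supseteq H(z)\cap\Pi_\Phi$.
   Context: Assumption F2: for $\beta\ge0$, $\Phi_\beta(x)=-\sum_{1\le i<j\le n}a_{i,j}x_ix_j+\beta\sum_{i=1}^n s_ix_i$ on $x\in\{0,1\}^n$, where all $a_{i,j}\ge0$ and all $s_i\ge0$ are rationals. $H(x)=\{i:x_i=1\}$. *)

theory Defs
  imports Main Complex_Main
begin

definition binvecs :: "nat \<Rightarrow> (nat \<Rightarrow> real) set" where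
  "binvecs n = {x. (\<forall>i\<in>{1..n}. x i = 0 \<or> x i = 1) \<and> (\<forall>i. i \<notin> {1..n} \<longrightarrow> x i = 0)}"

definition Phi :: "nat \<Rightarrow> (nat \<Rightarrow> nat \<Rightarrow> real) \<Rightarrow> (nat \<Rightarrow> real) \<Rightarrow> real \<Rightarrow> (nat \<Rightarrow> real) \<Rightarrow> real" where
  "Phi n a s \<beta> x = - (\<Sum>j\<in>{1..n}. \<Sum>i\<in>{1..<j}. a i j * x i * x j) + \<beta> * (\<Sum>i\<in>{1..n}. s i * x i)"

definition is_minimizer :: "nat \<Rightarrow> (nat \<Rightarrow> nat \<Rightarrow> real) \<Rightarrow> (nat \<Rightarrow> real) \<Rightarrow> real \<Rightarrow> (nat \<Rightarrow> real) \<Rightarrow> bool" where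
  "is_minimizer n a s \<beta> y \<longleftrightarrow> y \<in> binvecs n \<and> (\<forall>x\<in>binvecs n. Phi n a s \<beta> y \<le> Phi n a s \<beta> x)"

definition Hset :: "nat \<Rightarrow> (nat \<Rightarrow> real) \<Rightarrow> nat set" where
  "Hset n x = {i\<in>{1..n}. x i = 1}"

definition PiPhi :: "nat \<Rightarrow> (nat \<Rightarrow> real) \<Rightarrow> nat set" where
  "PiPhi n s = {i\<in>{1..n}. s i \<noteq> 0}"

end

theory Submission
  imports Defs
begin

text \<open>
  For \<open>a \<ge> 0\<close> every \<open>\<Phi>\<^sub>\<beta>\<close> is submodular with respect to the pointwise
  lattice operations, and raising \<open>\<beta>\<close> only adds a multiple of the modular
  penalty \<open>\<Sum> s\<^sub>i x\<^sub>i\<close>. Comparing the two minimizers with \<open>y \<squnion> z\<close> and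
  \<open>y \<sqinter> z\<close> (Topkis' argument) gives \<open>\<Sum> s\<^sub>i z\<^sub>i \<le> \<Sum> s\<^sub>i (y \<sqinter> z)\<^sub>i\<close>; since
  \<open>s \<ge> 0\<close> this forces \<open>z\<^sub>i \<le> y\<^sub>i\<close> wherever \<open>s\<^sub>i \<noteq> 0\<close>.
\<close>

lemma mult_add_mult_le_max_mult_max_add_min_mult_min:
  fixes v w p q :: "'a::linordered_ring"
  shows "v * p + w * q \<le> max v w * max p q + min v w * min p q"
proof -
  have "0 \<le> (v - w) * (q - p)" if "w \<le> v" "p \<le> q" for v w p q :: 'a
    using that by simp
  then show ?thesis
    by (cases "w \<le> v"; cases "q \<le> p") (force simp: max_def min_def algebra_simps)+
qed

lemma binvecs_sup: "x \<in> binvecs n \<Longrightarrow> y \<in> binvecs n \<Longrightarrow> sup x y \<in> binvecs n"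
  by (auto simp: binvecs_def sup_max max_def)

lemma binvecs_inf: "x \<in> binvecs n \<Longrightarrow> y \<in> binvecs n \<Longrightarrow> inf x y \<in> binvecs n"
  by (auto simp: binvecs_def inf_min min_def)

definition penalty :: "nat \<Rightarrow> (nat \<Rightarrow> real) \<Rightarrow> (nat \<Rightarrow> real) \<Rightarrow> real" where
  "penalty n s x = (\<Sum>i\<in>{1..n}. s i * x i)"

definition interaction :: "nat \<Rightarrow> (nat \<Rightarrow> nat \<Rightarrow> real) \<Rightarrow> (nat \<Rightarrow> real) \<Rightarrow> real" where
  "interaction n a x = (\<Sum>j\<in>{1..n}. \<Sum>i\<in>{1..<j}. a i j * x i * x j)"

lemma Phi_eq: "Phi n a s \<beta> x = \<beta> * penalty n s x - interaction n a x"
  by (simp add: Phi_def penalty_def interaction_def)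

lemma penalty_sup_inf: "penalty n s (sup x y) + penalty n s (inf x y) = penalty n s x + penalty n s y"
proof -
  have "s i * max (x i) (y i) + s i * min (x i) (y i) = s i * x i + s i * y i" for i
    by (simp add: max_def min_def)
  then show ?thesis
    by (simp add: penalty_def sup_max inf_min sum.distrib[symmetric])
qed

lemma interaction_sup_inf:
  assumes "\<And>i j. 1 \<le> i \<Longrightarrow> i < j \<Longrightarrow> j \<le> n \<Longrightarrow> a i j \<ge> 0"
  shows "interaction n a x + interaction n a y \<le> interaction n a (sup x y) + interaction n a (inf x y)"
proof -
  have "a i j * x i * x j + a i j * y i * y j
      \<le> a i j * max (x i) (y i) * max (x j) (y j) + a i j * min (x i) (y i) * min (x j) (y j)"
    if "j \<in> {1..n}" "i \<in> {1..<j}" for i j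
    using mult_left_mono[OF mult_add_mult_le_max_mult_max_add_min_mult_min assms[of i j]] that
    by (simp add: distrib_left mult.assoc)
  then show ?thesis
    unfolding interaction_def sum.distrib[symmetric] sup_max inf_min sup_fun_def inf_fun_def
    by (intro sum_mono) auto
qed

lemma Phi_submodular:
  assumes "\<And>i j. 1 \<le> i \<Longrightarrow> i < j \<Longrightarrow> j \<le> n \<Longrightarrow> a i j \<ge> 0"
  shows "Phi n a s \<beta> (sup x y) + Phi n a s \<beta> (inf x y) \<le> Phi n a s \<beta> x + Phi n a s \<beta> y"
  using interaction_sup_inf[OF assms, where x = x and y = y] penalty_sup_inf[of n s x y]
  by (simp add: Phi_eq algebra_simps flip: distrib_left)

lemma penalty_minimizer_le_inf:
  assumes a: "\<And>i j. 1 \<le> i \<Longrightarrow> i < j \<Longrightarrow> j \<le> n \<Longrightarrow> a i j \<ge> 0"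
    and "\<beta>1 < \<beta>0"
    and y: "is_minimizer n a s \<beta>1 y" and z: "is_minimizer n a s \<beta>0 z"
  shows "penalty n s z \<le> penalty n s (inf y z)"
proof -
  have "sup y z \<in> binvecs n" "inf y z \<in> binvecs n"
    using y z by (auto simp: is_minimizer_def intro: binvecs_sup binvecs_inf)
  then have "Phi n a s \<beta>1 y \<le> Phi n a s \<beta>1 (sup y z)" "Phi n a s \<beta>0 z \<le> Phi n a s \<beta>0 (inf y z)"
    using y z by (auto simp: is_minimizer_def)
  moreover have "Phi n a s \<beta>1 (sup y z) + Phi n a s \<beta>1 (inf y z) \<le> Phi n a s \<beta>1 y + Phi n a s \<beta>1 z"
    by (rule Phi_submodular[OF a])
  ultimately have "(\<beta>0 - \<beta>1) * (penalty n s z - penalty n s (inf y z)) \<le> 0"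
    by (simp add: Phi_eq algebra_simps)
  then show ?thesis
    using \<open>\<beta>1 < \<beta>0\<close> by (simp add: mult_le_0_iff)
qed

lemma penalty_le_imp_eq_on_PiPhi:
  assumes s: "\<And>i. 1 \<le> i \<Longrightarrow> i \<le> n \<Longrightarrow> s i \<ge> 0"
    and le: "\<And>i. x i \<le> z i" and "penalty n s z \<le> penalty n s x"
    and i: "i \<in> PiPhi n s"
  shows "z i = x i"
proof -
  have nonneg: "\<forall>j\<in>{1..n}. 0 \<le> s j * (z j - x j)"
    using s le by (simp add: mult_nonneg_nonneg)
  moreover have "(\<Sum>j\<in>{1..n}. s j * (z j - x j)) \<le> 0"
    using \<open>penalty n s z \<le> penalty n s x\<close>
    by (simp add: penalty_def right_diff_distrib sum_subtractf)
  ultimately have "\<forall>j\<in>{1..n}. s j * (z j - x j) = 0"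
    by (metis (no_types, lifting) antisym sum_nonneg sum_nonneg_eq_0_iff finite_atLeastAtMost)
  then show ?thesis
    using i by (auto simp: PiPhi_def)
qed

theorem mainTheorem13:
  fixes n :: nat and a :: "nat \<Rightarrow> nat \<Rightarrow> real" and s :: "nat \<Rightarrow> real"
    and \<beta>0 \<beta>1 :: real and y z :: "nat \<Rightarrow> real"
  assumes a_rat: "\<And>i j. 1 \<le> i \<Longrightarrow> i < j \<Longrightarrow> j \<le> n \<Longrightarrow> a i j \<in> \<rat> \<and> a i j \<ge> 0"
    and s_rat: "\<And>i. 1 \<le> i \<Longrightarrow> i \<le> n \<Longrightarrow> s i \<in> \<rat> \<and> s i \<ge> 0"
    and b1: "0 \<le> \<beta>1" and b10: "\<beta>1 < \<beta>0"
    and y: "is_minimizer n a s \<beta>1 y"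
    and z: "is_minimizer n a s \<beta>0 z"
  shows "Hset n z \<inter> PiPhi n s \<subseteq> Hset n y \<inter> PiPhi n s"
proof
  fix i assume i: "i \<in> Hset n z \<inter> PiPhi n s"
  have "penalty n s z \<le> penalty n s (inf y z)"
    using penalty_minimizer_le_inf[OF _ b10 y z] a_rat by blast
  then have "z i = min (y i) (z i)"
    using penalty_le_imp_eq_on_PiPhi[of n s "inf y z" z] s_rat i by (auto simp: inf_min)
  moreover have "y i = 0 \<or> y i = 1"
    using y i by (auto simp: is_minimizer_def binvecs_def Hset_def)
  ultimately show "i \<in> Hset n y \<inter> PiPhi n s"
    using i by (auto simp: Hset_def)
qed

end
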